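(* Let $\alpha,\beta$ be independent standard normal random variables and $b\in\mathbb{R}$. For any fixed constant $0<C\le1$, even $i>0$ and any $x_1\in[0,C]$, $$\mathbb{E}_{\alpha,\beta}\Big[h_i\Big(\tfrac{\alpha x_1+\beta\sqrt{C^2-x_1^2}}{C}\Big)\mathbf 1\{\alpha\ge b\}\Big]=q_ix_1^i,\quad q_i=\frac{(i-1)!!\,e^{-b^2/2}}{C^i\sqrt{2\pi}}\sum_{r=1,\ r\text{ odd}}^{i-1}\frac{(-1)^{\frac{i-r-1}{2}}}{r!!}\binom{i/2-1}{(r-1)/2}b^r.$$ Similarly, for any fixed constant $C>0$, odd $i>0$ and any $x_1\in[0,C]$, the same expectation equals $q_ix_1^i$ with $$q_i=\frac{(i-1)!!\,e^{-b^2/2}}{C^i\sqrt{2\pi}}\sum_{r=0,\ r\text{ even}}^{i-1}\frac{(-1)^{\frac{i-r-1}{2}}}{r!!}\binom{i/2-1}{(r-1)/2}b^r.$$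
   Context: $h_i$ is the degree-$i$ probabilists' Hermite polynomial, $h_i(x)=i!\sum_{k=0}^{\lfloor i/2\rfloor}\frac{(-1)^k}{k!(i-2k)!}\frac{x^{i-2k}}{2^k}$. Double factorials use $0!!=1$. Binomial coefficients with non-integer arguments are generalized binomial coefficients $\binom{a}{k}=\frac{\Gamma(a+1)}{\Gamma(k+1)\Gamma(a-k+1)}$. *)

theory Defs
  imports "HOL-Probability.Probability"
begin

definition hermite :: "nat \<Rightarrow> real \<Rightarrow> real" where
  "hermite i x = fact i * (\<Sum>k\<le>i div 2. (-1)^k / (fact k * fact (i - 2*k)) * x^(i - 2*k) / 2^k)"

fun dfact :: "nat \<Rightarrow> nat" where
  "dfact 0 = 1"
| "dfact (Suc 0) = 1"
| "dfact (Suc (Suc n)) = Suc (Suc n) * dfact n"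

definition gbinom :: "real \<Rightarrow> real \<Rightarrow> real" where
  "gbinom a k = Gamma (a + 1) / (Gamma (k + 1) * Gamma (a - k + 1))"

definition std_normal2 :: "(real \<times> real) measure" where
  "std_normal2 = density lborel std_normal_density \<Otimes>\<^sub>M density lborel std_normal_density"

end

theory Submission
  imports Defs
begin

(* Put t = x1 / C and s = sqrt (1 - t^2), so that the Hermite argument is t alpha + s beta.
   Writing H_a,n(x) = sum_k c_(n,k) a^k x^(n-2k) for the Hermite polynomial of variance a
   (so He_n = H_1,n), averaging over a Gaussian perturbation lowers the variance:
   E H_a,n(u + s beta) = H_(a-s^2),n(u).  Integrating out beta therefore leaves
   H_(t^2),i(t alpha) = t^i He_i(alpha).  Since (phi He_(i-1))' = - phi He_i, the truncated moment
   E[He_i(alpha) 1{alpha >= b}] equals phi(b) He_(i-1)(b), and expanding He_(i-1)(b) with double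
   factorials and Gamma values at half-integers gives q_i. *)

section \<open>Integrals against the standard normal distribution\<close>

abbreviation std_normal :: "real measure" where
  "std_normal \<equiv> density lborel std_normal_density"

lemma prob_space_std_normal: "prob_space std_normal"
  by (rule prob_space_normal_density) simp

lemma pair_sigma_finite_std_normal: "pair_sigma_finite std_normal std_normal"
  using prob_space_std_normal prob_space_imp_sigma_finite by (simp add: pair_sigma_finite_def)

lemma integrable_std_normal_iff:
  fixes f :: "real \<Rightarrow> real"
  assumes [measurable]: "f \<in> borel_measurable borel"
  shows "integrable std_normal f \<longleftrightarrow> integrable lborel (\<lambda>x. std_normal_density x * f x)"
  by (subst integrable_density) (auto simp: normal_density_nonneg)

lemma integral_std_normal:
  fixes f :: "real \<Rightarrow> real"
  assumes [measurable]: "f \<in> borel_measurable borel"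
  shows "integral\<^sup>L std_normal f = integral\<^sup>L lborel (\<lambda>x. std_normal_density x * f x)"
  by (subst integral_density) (auto simp: normal_density_nonneg)

definition gauss_moment :: "nat \<Rightarrow> real" where
  "gauss_moment l = (if even l then fact l / (2 ^ (l div 2) * fact (l div 2)) else 0)"

lemma integrable_std_normal_power: "integrable std_normal (\<lambda>x. x ^ k)"
  using integrable_std_normal_iff integrable_std_normal_moment by simp

lemma integral_std_normal_power: "integral\<^sup>L std_normal (\<lambda>x. x ^ k) = gauss_moment k"
proof (cases "even k")
  case True
  then obtain j where "k = 2 * j" by blast
  then show ?thesis
    using integral_std_normal integral_std_normal_moment_even[of j] by (simp add: gauss_moment_def)
next
  case False
  then obtain j where "k = 2 * j + 1" using oddE by blast
  then show ?thesis
    using integral_std_normal integral_std_normal_moment_odd[of j] by (simp add: gauss_moment_def)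
qed

lemma power_shift_expand: "(u + s * x) ^ m = (\<Sum>l\<le>m. real (m choose l) * u^(m - l) * s^l * x^l)"
  using binomial_ring[of "s * x" u m] by (simp add: add.commute power_mult_distrib mult_ac)

lemma integrable_std_normal_shift_power: "integrable std_normal (\<lambda>x. (u + s * x) ^ m)"
  unfolding power_shift_expand
  by (intro Bochner_Integration.integrable_sum integrable_mult_right integrable_std_normal_power)

lemma integral_std_normal_shift_power:
  "integral\<^sup>L std_normal (\<lambda>x. (u + s * x) ^ m)
    = (\<Sum>p\<le>m. real (m choose (2*p)) * u^(m - 2*p) * s^(2*p) * gauss_moment (2*p))"
proof -
  have "integral\<^sup>L std_normal (\<lambda>x. (u + s * x) ^ m)
      = (\<Sum>l\<le>m. real (m choose l) * u^(m - l) * s^l * gauss_moment l)"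
    unfolding power_shift_expand
    by (subst Bochner_Integration.integral_sum)
       (auto intro!: integrable_mult_right integrable_std_normal_power simp: integral_std_normal_power)
  also have "\<dots> = (\<Sum>l\<le>Suc (2*m). real (m choose l) * u^(m - l) * s^l * gauss_moment l)"
    by (rule sum.mono_neutral_left) auto
  also have "\<dots> = (\<Sum>p\<le>m. real (m choose (2*p)) * u^(m - 2*p) * s^(2*p) * gauss_moment (2*p))"
    by (subst sum.in_pairs_0) (simp add: gauss_moment_def)
  finally show ?thesis .
qed

lemma (in pair_sigma_finite) integrable_mult_fst_snd:
  fixes f :: "'a \<Rightarrow> real" and g :: "'b \<Rightarrow> real"
  assumes f: "integrable M1 f" and g: "integrable M2 g"
  shows "integrable (M1 \<Otimes>\<^sub>M M2) (\<lambda>p. f (fst p) * g (snd p))"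
proof (rule Fubini_integrable)
  have [measurable]: "f \<in> borel_measurable M1" "g \<in> borel_measurable M2"
    using f g by auto
  show "(\<lambda>p. f (fst p) * g (snd p)) \<in> borel_measurable (M1 \<Otimes>\<^sub>M M2)"
    by measurable
  have "integrable M1 (\<lambda>x. \<bar>f x\<bar> * \<integral>y. \<bar>g y\<bar> \<partial>M2)"
    using f by (intro integrable_mult_left) auto
  then show "integrable M1 (\<lambda>x. \<integral>y. norm (f (fst (x, y)) * g (snd (x, y))) \<partial>M2)"
    by (simp add: abs_mult)
  show "AE x in M1. integrable M2 (\<lambda>y. f (fst (x, y)) * g (snd (x, y)))"
    using g by (auto intro!: integrable_mult_right)
qed

section \<open>Hermite polynomials of arbitrary variance\<close>

definition hermite_coeff :: "nat \<Rightarrow> nat \<Rightarrow> real" where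
  "hermite_coeff n k = (if 2*k \<le> n then (-1)^k * fact n / (fact k * fact (n - 2*k) * 2^k) else 0)"

(* For a > 0 this is a^(n/2) He_n(x / sqrt a), the Hermite polynomial of the Gaussian of variance a. *)
definition scaled_hermite :: "real \<Rightarrow> nat \<Rightarrow> real \<Rightarrow> real" where
  "scaled_hermite a n x = (\<Sum>k\<le>n. hermite_coeff n k * a^k * x^(n - 2*k))"

lemma hermite_altdef: "hermite n x = (\<Sum>k\<le>n. hermite_coeff n k * x^(n - 2*k))"
proof -
  have "hermite n x = (\<Sum>k\<le>n div 2. hermite_coeff n k * x^(n - 2*k))"
    unfolding hermite_def hermite_coeff_def
    by (subst sum_distrib_left, rule sum.cong) (auto simp: field_simps)
  also have "\<dots> = (\<Sum>k\<le>n. hermite_coeff n k * x^(n - 2*k))"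
    by (rule sum.mono_neutral_left) (auto simp: hermite_coeff_def)
  finally show ?thesis .
qed

lemma hermite_eq_scaled_hermite: "hermite n x = scaled_hermite 1 n x"
  by (simp add: hermite_altdef scaled_hermite_def)

lemma scaled_hermite_rescale: "scaled_hermite (t^2) n (t * y) = t^n * hermite n y"
  unfolding scaled_hermite_def hermite_altdef sum_distrib_left
proof (rule sum.cong[OF refl])
  fix k
  show "hermite_coeff n k * (t^2)^k * (t * y)^(n - 2*k) = t^n * (hermite_coeff n k * y^(n - 2*k))"
  proof (cases "2*k \<le> n")
    case True
    then have "t^n = t^(2*k) * t^(n - 2*k)"
      by (simp flip: power_add)
    then show ?thesis
      by (simp add: power_mult power_mult_distrib)
  next
    case False
    then show ?thesis
      by (simp add: hermite_coeff_def)
  qed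
qed

(* Both sides equal (-1)^k n! / (k! p! q! 2^(k+p)) with q = n - 2k - 2p. *)
lemma hermite_coeff_moment:
  assumes "2*k + 2*p \<le> n"
  shows "hermite_coeff n k * real ((n - 2*k) choose (2*p)) * gauss_moment (2*p)
    = hermite_coeff n (k + p) * real ((k + p) choose k) * (-1)^p"
proof -
  define q where "q = n - 2*k - 2*p"
  have diffs: "n - 2*k = q + 2*p" "n - 2*(k + p) = q"
    using assms by (auto simp: q_def)
  have sign: "(-1::real)^(k + p) * (-1)^p = (-1)^k"
    by (simp add: power_add mult.assoc flip: power_mult_distrib)
  have "hermite_coeff n k * real ((n - 2*k) choose (2*p)) * gauss_moment (2*p)
      = (-1)^k * fact n / (fact k * fact (q + 2*p) * 2^k) * (fact (q + 2*p) / (fact (2*p) * fact q))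
        * (fact (2*p) / (2^p * fact p))"
    using assms diffs by (simp add: hermite_coeff_def gauss_moment_def binomial_fact)
  also have "\<dots> = (-1)^(k + p) * (-1)^p * fact n / (fact (k + p) * fact q * 2^(k + p))
      * (fact (k + p) / (fact k * fact p))"
    unfolding sign by (simp add: power_add field_simps)
  also have "\<dots> = hermite_coeff n (k + p) * real ((k + p) choose k) * (-1)^p"
    using assms diffs by (simp add: hermite_coeff_def binomial_fact mult_ac)
  finally show ?thesis .
qed

lemma hermite_coeff_moment_term:
  assumes "k \<le> m"
  shows "hermite_coeff n k * a^k * (real ((n - 2*k) choose (2*(m - k))) * u^(n - 2*k - 2*(m - k))
      * s^(2*(m - k)) * gauss_moment (2*(m - k)))
    = hermite_coeff n m * (real (m choose k) * a^k * (-(s^2))^(m - k)) * u^(n - 2*m)"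
proof (cases "2*m \<le> n")
  case True
  have "n - 2*k - 2*(m - k) = n - 2*m"
    using assms by simp
  then have "hermite_coeff n k * a^k * (real ((n - 2*k) choose (2*(m - k))) * u^(n - 2*k - 2*(m - k))
      * s^(2*(m - k)) * gauss_moment (2*(m - k)))
    = (hermite_coeff n k * real ((n - 2*k) choose (2*(m - k))) * gauss_moment (2*(m - k)))
      * (a^k * u^(n - 2*m) * s^(2*(m - k)))"
    by (simp only: mult_ac)
  also have "\<dots> = (hermite_coeff n m * real (m choose k) * (-1)^(m - k)) * (a^k * u^(n - 2*m) * s^(2*(m - k)))"
    using hermite_coeff_moment[of k "m - k" n] True assms by simp
  also have "\<dots> = hermite_coeff n m * (real (m choose k) * a^k * ((-1)^(m - k) * s^(2*(m - k)))) * u^(n - 2*m)"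
    by (simp only: mult_ac)
  also have "(-1)^(m - k) * s^(2*(m - k)) = (-(s^2))^(m - k)"
    unfolding power_minus[of "s^2"] power_mult ..
  finally show ?thesis .
next
  case False
  then show ?thesis
    using assms by (cases "2*k \<le> n") (auto simp: hermite_coeff_def)
qed

lemma sum_square_eq_sum_triangle:
  fixes F :: "nat \<Rightarrow> nat \<Rightarrow> 'a::comm_monoid_add"
  assumes "\<And>k p. n < k + p \<Longrightarrow> F k p = 0"
  shows "(\<Sum>k\<le>n. \<Sum>p\<le>n. F k p) = (\<Sum>m\<le>n. \<Sum>k\<le>m. F k (m - k))"
proof -
  have "(\<Sum>k\<le>n. \<Sum>p\<le>n. F k p) = (\<Sum>(k, p)\<in>{..n} \<times> {..n}. F k p)"
    by (simp add: sum.cartesian_product)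
  also have "\<dots> = (\<Sum>(k, p)\<in>{(k, p). k + p \<le> n}. F k p)"
    by (rule sum.mono_neutral_right) (auto simp: not_le intro!: assms)
  also have "\<dots> = (\<Sum>m\<le>n. \<Sum>k\<le>m. F k (m - k))"
    by (rule sum.triangle_reindex_eq)
  finally show ?thesis .
qed

lemma integral_std_normal_scaled_hermite_shift:
  "integral\<^sup>L std_normal (\<lambda>x. scaled_hermite a n (u + s * x)) = scaled_hermite (a - s^2) n u"
proof -
  define F where "F k p = hermite_coeff n k * a^k *
      (real ((n - 2*k) choose (2*p)) * u^(n - 2*k - 2*p) * s^(2*p) * gauss_moment (2*p))" for k p
  have F_zero: "F k p = 0" if "n < 2*k + 2*p" for k p
    using that by (cases "2*k \<le> n") (auto simp: F_def hermite_coeff_def)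
  have binomial: "(a - s^2)^m = (\<Sum>k\<le>m. real (m choose k) * a^k * (-(s^2))^(m - k))" for m
    using binomial_ring[of a "-(s^2)" m] by simp
  have "integral\<^sup>L std_normal (\<lambda>x. scaled_hermite a n (u + s * x))
      = (\<Sum>k\<le>n. hermite_coeff n k * a^k * integral\<^sup>L std_normal (\<lambda>x. (u + s * x)^(n - 2*k)))"
    unfolding scaled_hermite_def
    by (subst Bochner_Integration.integral_sum)
       (auto intro!: integrable_mult_right integrable_std_normal_shift_power)
  also have "\<dots> = (\<Sum>k\<le>n. \<Sum>p\<le>n - 2*k. F k p)"
    by (simp add: F_def integral_std_normal_shift_power sum_distrib_left)
  also have "\<dots> = (\<Sum>k\<le>n. \<Sum>p\<le>n. F k p)"
    by (intro sum.cong refl sum.mono_neutral_left) (auto intro!: F_zero)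
  also have "\<dots> = (\<Sum>m\<le>n. \<Sum>k\<le>m. F k (m - k))"
    by (rule sum_square_eq_sum_triangle) (simp add: F_zero)
  also have "\<dots> = (\<Sum>m\<le>n. \<Sum>k\<le>m. hermite_coeff n m * (real (m choose k) * a^k * (-(s^2))^(m - k)) * u^(n - 2*m))"
    unfolding F_def by (intro sum.cong refl hermite_coeff_moment_term) simp
  also have "\<dots> = scaled_hermite (a - s^2) n u"
    by (simp add: scaled_hermite_def binomial sum_distrib_left sum_distrib_right)
  finally show ?thesis .
qed

lemma integrable_std_normal_indicator_power:
  assumes "A \<in> sets borel"
  shows "integrable std_normal (\<lambda>x. (t * x)^j * indicator A x)"
proof -
  have "integrable std_normal (\<lambda>x. indicator A x *\<^sub>R (t^j * x^j))"
    using assms by (intro integrable_mult_indicator integrable_mult_right integrable_std_normal_power) auto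
  then show ?thesis
    by (simp add: power_mult_distrib mult_ac)
qed

lemma integrable_std_normal2_scaled_hermite:
  assumes "A \<in> sets borel"
  shows "integrable std_normal2 (\<lambda>p. scaled_hermite a n (t * fst p + s * snd p) * indicator A (fst p))"
proof -
  interpret pair_sigma_finite std_normal std_normal
    by (rule pair_sigma_finite_std_normal)
  have "(\<lambda>p. scaled_hermite a n (t * fst p + s * snd p) * indicator A (fst p))
    = (\<lambda>p. \<Sum>k\<le>n. \<Sum>l\<le>n - 2*k. (hermite_coeff n k * a^k * real ((n - 2*k) choose l) * s^l) *
          (((t * fst p)^(n - 2*k - l) * indicator A (fst p)) * snd p ^ l))"
    unfolding scaled_hermite_def power_shift_expand sum_distrib_left sum_distrib_right
    by (intro ext sum.cong refl) (simp add: mult_ac)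
  then show ?thesis
    unfolding std_normal2_def
    by (simp only:)
       (intro Bochner_Integration.integrable_sum integrable_mult_right integrable_mult_fst_snd
          integrable_std_normal_indicator_power integrable_std_normal_power assms)
qed

lemma integral_std_normal2_scaled_hermite:
  assumes "A \<in> sets borel"
  shows "integral\<^sup>L std_normal2 (\<lambda>p. scaled_hermite a n (t * fst p + s * snd p) * indicator A (fst p))
    = integral\<^sup>L std_normal (\<lambda>x. scaled_hermite (a - s^2) n (t * x) * indicator A x)"
proof -
  interpret pair_sigma_finite std_normal std_normal
    by (rule pair_sigma_finite_std_normal)
  have "integral\<^sup>L std_normal2 (\<lambda>p. scaled_hermite a n (t * fst p + s * snd p) * indicator A (fst p))
      = (\<integral>x. (\<integral>y. scaled_hermite a n (t * x + s * y) * indicator A x \<partial>std_normal) \<partial>std_normal)"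
    using integral_fst'[OF integrable_std_normal2_scaled_hermite[OF assms, unfolded std_normal2_def]]
    by (simp add: std_normal2_def)
  also have "\<dots> = integral\<^sup>L std_normal (\<lambda>x. scaled_hermite (a - s^2) n (t * x) * indicator A x)"
    by (simp add: integral_std_normal_scaled_hermite_shift)
  finally show ?thesis .
qed

section \<open>Truncated moments of Hermite polynomials\<close>

definition hermite_derivative :: "nat \<Rightarrow> real \<Rightarrow> real" where
  "hermite_derivative n x = (\<Sum>k\<le>n. hermite_coeff n k * real (n - 2*k) * x^(n - 2*k - 1))"

lemma hermite_has_real_derivative: "(hermite n has_real_derivative hermite_derivative n x) (at x)"
proof -
  have "((\<lambda>x. \<Sum>k\<le>n. hermite_coeff n k * x^(n - 2*k)) has_real_derivative
      (\<Sum>k\<le>n. hermite_coeff n k * (real (n - 2*k) * x^(n - 2*k - 1)))) (at x)"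
    by (intro DERIV_sum DERIV_cmult) (metis DERIV_pow One_nat_def)
  then show ?thesis
    unfolding hermite_altdef[abs_def] hermite_derivative_def by (simp add: mult_ac)
qed

(* The factorials are named so that field_simps treats them as atoms rather than unfolding them. *)
lemma hermite_coeff_Suc_Suc_interior:
  assumes "2*k + 2 \<le> n"
  shows "hermite_coeff (Suc n) (Suc k) = hermite_coeff n (Suc k) - hermite_coeff n k * real (n - 2*k)"
proof -
  define q where "q = n - 2*k - 2"
  have n: "n = q + 2*k + 2" and diffs: "Suc n - 2 * Suc k = Suc q" "n - 2 * Suc k = q" "n - 2*k = Suc (Suc q)"
    using assms by (auto simp: q_def)
  define Z N K Q T A B C where "Z = ((-1)::real)^k" "N = (fact n :: real)" "K = (fact k :: real)"
    "Q = (fact q :: real)" "T = (2::real)^k" "A = real q + 1" "B = real q + 2" "C = real k + 1"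
  note atoms_def = Z_N_K_Q_T_A_B_C_def
  have "(fact (Suc n) :: real) = (A + 2 * C) * N"
    unfolding atoms_def using n by (simp add: algebra_simps)
  then have lhs: "hermite_coeff (Suc n) (Suc k) = - Z * N * (A + 2 * C) / (C * K * (A * Q) * (2 * T))"
    using assms diffs unfolding hermite_coeff_def atoms_def
    by (simp add: mult_ac) (simp add: algebra_simps)
  have rhs1: "hermite_coeff n (Suc k) = - Z * N / (C * K * Q * (2 * T))"
    using assms diffs unfolding hermite_coeff_def atoms_def by (simp add: mult_ac)
  have rhs2: "hermite_coeff n k * real (n - 2*k) = Z * N / (K * (B * (A * Q)) * T) * B"
    using assms diffs unfolding hermite_coeff_def atoms_def by (simp add: mult_ac add.commute)
  have "K \<noteq> 0" "Q \<noteq> 0" "T \<noteq> 0" "A \<noteq> 0" "B \<noteq> 0" "C \<noteq> 0"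
    unfolding atoms_def by auto
  then show ?thesis
    unfolding lhs rhs1 rhs2 by (simp add: field_simps)
qed

lemma hermite_coeff_Suc_Suc:
  "hermite_coeff (Suc n) (Suc k) = hermite_coeff n (Suc k) - hermite_coeff n k * real (n - 2*k)"
proof -
  consider (interior) "2*k + 2 \<le> n" | (top) "n = 2*k + 1" | (beyond) "n \<le> 2*k"
    by linarith
  then show ?thesis
  proof cases
    case interior
    then show ?thesis
      by (rule hermite_coeff_Suc_Suc_interior)
  next
    case top
    define Z N K T C where "Z = ((-1)::real)^k" "N = (fact n :: real)" "K = (fact k :: real)"
      "T = (2::real)^k" "C = real k + 1"
    note atoms_def = Z_N_K_T_C_def
    have "(fact (Suc n) :: real) = 2 * C * N"
      unfolding atoms_def using top by (simp add: algebra_simps)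
    then have lhs: "hermite_coeff (Suc n) (Suc k) = - Z * (2 * C * N) / (C * K * (2 * T))"
      using top unfolding hermite_coeff_def atoms_def by (simp add: mult_ac) (simp add: algebra_simps)
    have rhs: "hermite_coeff n k * real (n - 2*k) = Z * N / (K * T)"
      using top unfolding hermite_coeff_def atoms_def by (simp add: mult_ac)
    have "K \<noteq> 0" "T \<noteq> 0" "C \<noteq> 0"
      unfolding atoms_def by auto
    then show ?thesis
      unfolding lhs rhs using top by (simp add: hermite_coeff_def field_simps)
  next
    case beyond
    then show ?thesis
      by (simp add: hermite_coeff_def)
  qed
qed

lemma hermite_Suc: "hermite (Suc n) x = x * hermite n x - hermite_derivative n x"
proof -
  have "x * hermite n x = (\<Sum>k\<le>n. hermite_coeff n k * x^(Suc n - 2*k))"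
    unfolding hermite_altdef sum_distrib_left
    by (rule sum.cong) (auto simp: hermite_coeff_def Suc_diff_le)
  also have "\<dots> = (\<Sum>k\<le>Suc n. hermite_coeff n k * x^(Suc n - 2*k))"
    by (simp add: hermite_coeff_def)
  also have "\<dots> = hermite_coeff n 0 * x^(Suc n) + (\<Sum>k\<le>n. hermite_coeff n (Suc k) * x^(n - 2*k - 1))"
    by (subst sum.atMost_Suc_shift) simp
  finally have "x * hermite n x = \<dots>" .
  moreover have "hermite (Suc n) x = hermite_coeff (Suc n) 0 * x^(Suc n)
      + (\<Sum>k\<le>n. hermite_coeff (Suc n) (Suc k) * x^(n - 2*k - 1))"
    unfolding hermite_altdef by (subst sum.atMost_Suc_shift) simp
  moreover have "hermite_coeff (Suc n) 0 = hermite_coeff n 0"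
    by (simp add: hermite_coeff_def)
  ultimately show ?thesis
    by (simp add: hermite_derivative_def hermite_coeff_Suc_Suc left_diff_distrib sum_subtractf)
qed

lemma std_normal_density_has_real_derivative:
  "(std_normal_density has_real_derivative - x * std_normal_density x) (at x)"
  unfolding std_normal_density_def[abs_def]
  by (auto intro!: derivative_eq_intros simp: field_simps)

lemma std_normal_density_hermite_has_real_derivative:
  "((\<lambda>x. - (std_normal_density x * hermite n x)) has_real_derivative
      std_normal_density x * hermite (Suc n) x) (at x)"
  by (rule DERIV_cong[OF DERIV_minus[OF DERIV_mult[OF std_normal_density_has_real_derivative
        hermite_has_real_derivative]]])
     (simp add: hermite_Suc algebra_simps)

lemma tendsto_power_mult_exp_neg_square: "((\<lambda>x. x^j * exp (- x\<^sup>2 / 2)) \<longlongrightarrow> (0::real)) at_top"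
proof (rule tendsto_sandwich)
  show "\<forall>\<^sub>F x in at_top. 0 \<le> (x::real)^j * exp (- x\<^sup>2 / 2)"
    using eventually_ge_at_top[of "0::real"] by eventually_elim simp
  show "\<forall>\<^sub>F x in at_top. (x::real)^j * exp (- x\<^sup>2 / 2) \<le> x^j / exp x"
    using eventually_ge_at_top[of "2::real"]
  proof eventually_elim
    case (elim x)
    then have "exp (- x\<^sup>2 / 2) \<le> exp (- x)"
      by (simp add: power2_eq_square field_simps)
    then have "x^j * exp (- x\<^sup>2 / 2) \<le> x^j * exp (- x)"
      using elim by (intro mult_left_mono) auto
    then show ?case
      by (simp add: exp_minus field_simps)
  qed
qed (simp_all add: tendsto_power_div_exp_0)

lemma tendsto_std_normal_density_hermite:
  "((\<lambda>x. std_normal_density x * hermite n x) \<longlongrightarrow> 0) at_top"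
proof -
  have "(\<lambda>x. std_normal_density x * hermite n x)
      = (\<lambda>x. 1 / sqrt (2 * pi) * (\<Sum>k\<le>n. hermite_coeff n k * (x^(n - 2*k) * exp (- x\<^sup>2 / 2))))"
    by (simp add: fun_eq_iff std_normal_density_def hermite_altdef sum_distrib_left sum_distrib_right
        sum_divide_distrib mult_ac)
  then show ?thesis
    by (simp only:)
       (intro tendsto_mult_right_zero tendsto_null_sum tendsto_power_mult_exp_neg_square)
qed

lemma borel_measurable_hermite [measurable]: "hermite n \<in> borel_measurable borel"
  unfolding hermite_altdef[abs_def] by measurable

lemma integrable_std_normal_hermite: "integrable std_normal (hermite n)"
  unfolding hermite_altdef[abs_def]
  by (intro Bochner_Integration.integrable_sum integrable_mult_right integrable_std_normal_power)

lemma set_integral_std_normal_density_hermite_interval: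
  assumes "b \<le> y"
  shows "(LINT x:{b..y}|lborel. std_normal_density x * hermite (Suc n) x)
    = std_normal_density b * hermite n b - std_normal_density y * hermite n y"
proof -
  let ?f = "\<lambda>x. std_normal_density x * hermite (Suc n) x"
  have "continuous_on {b..y} ?f"
    by (intro continuous_at_imp_continuous_on ballI isCont_mult
        DERIV_isCont[OF std_normal_density_has_real_derivative] DERIV_isCont[OF hermite_has_real_derivative])
  moreover have "((\<lambda>x. - (std_normal_density x * hermite n x)) has_vector_derivative ?f x) (at x within {b..y})" for x
    using std_normal_density_hermite_has_real_derivative[of n x]
    by (simp add: has_real_derivative_iff_has_vector_derivative has_vector_derivative_at_within)
  ultimately show ?thesis
    unfolding set_lebesgue_integral_def
    by (subst integral_FTC_atLeastAtMost[OF assms, where F = "\<lambda>x. - (std_normal_density x * hermite n x)"]) auto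
qed

lemma integral_std_normal_hermite_tail:
  "integral\<^sup>L std_normal (\<lambda>x. hermite (Suc n) x * indicator {b..} x) = std_normal_density b * hermite n b"
proof -
  let ?f = "\<lambda>x. std_normal_density x * hermite (Suc n) x"
  have "integrable lborel ?f"
    using integrable_std_normal_hermite[of "Suc n"] integrable_std_normal_iff[of "hermite (Suc n)"] by simp
  then have "set_integrable lborel {b..} ?f"
    unfolding set_integrable_def by (intro integrable_mult_indicator) auto
  then have "((\<lambda>y. LINT x:{b..y}|lborel. ?f x) \<longlongrightarrow> (LINT x:{b..}|lborel. ?f x)) at_top"
    by (intro tendsto_set_lebesgue_integral_at_top) auto
  moreover have "((\<lambda>y. LINT x:{b..y}|lborel. ?f x) \<longlongrightarrow> std_normal_density b * hermite n b - 0) at_top"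
  proof (rule Lim_transform_eventually)
    show "((\<lambda>y. std_normal_density b * hermite n b - std_normal_density y * hermite n y)
        \<longlongrightarrow> std_normal_density b * hermite n b - 0) at_top"
      by (intro tendsto_diff tendsto_const tendsto_std_normal_density_hermite)
    show "\<forall>\<^sub>F y in at_top. std_normal_density b * hermite n b - std_normal_density y * hermite n y
        = (LINT x:{b..y}|lborel. ?f x)"
      using eventually_ge_at_top[of b]
      by eventually_elim (simp add: set_integral_std_normal_density_hermite_interval)
  qed
  ultimately have "(LINT x:{b..}|lborel. ?f x) = std_normal_density b * hermite n b"
    using tendsto_unique by force
  then show ?thesis
    unfolding set_lebesgue_integral_def
    by (subst integral_std_normal) (auto simp: mult_ac)
qed

section \<open>Double factorials and half-integer binomial coefficients\<close>

lemma dfact_even: "real (dfact (2*m)) = 2^m * fact m"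
  by (induction m) (simp_all add: algebra_simps)

lemma dfact_odd: "real (dfact (2*m + 1)) * (2^m * fact m) = fact (2*m + 1)"
proof (induction m)
  case (Suc m)
  have "2 * Suc m + 1 = Suc (Suc (2*m + 1))"
    by simp
  then have "real (dfact (2 * Suc m + 1)) * (2^Suc m * fact (Suc m))
      = (real (2*m + 3) * (2 * real (Suc m))) * (real (dfact (2*m + 1)) * (2^m * fact m))"
    by (simp add: algebra_simps)
  also have "\<dots> = fact (2 * Suc m + 1)"
    unfolding Suc by (simp add: algebra_simps)
  finally show ?case .
qed simp

lemma Gamma_nat_plus_half: "Gamma (real m + 1/2) = fact (2*m) * sqrt pi / (4^m * fact m)"
proof (induction m)
  case 0
  then show ?case
    using Gamma_one_half_real by simp
next
  case (Suc m)
  have "real m + 1/2 \<notin> \<int>\<^sub>\<le>\<^sub>0"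
    using nonpos_Ints_nonpos[of "real m + 1/2"] by auto
  then have "Gamma (real (Suc m) + 1/2) = (real m + 1/2) * Gamma (real m + 1/2)"
    using Gamma_plus1[of "real m + 1/2"] by (simp add: add_ac)
  also have "\<dots> = (2 * real m + 1) * fact (2*m) * sqrt pi / (2 * 4^m * fact m)"
    unfolding Suc by (simp add: field_simps)
  also have "\<dots> = (2 * (real m + 1)) * ((2 * real m + 1) * fact (2*m) * sqrt pi)
      / ((2 * (real m + 1)) * (2 * 4^m * fact m))"
    by (simp add: add_pos_pos)
  also have "\<dots> = fact (2 * Suc m) * sqrt pi / (4^Suc m * fact (Suc m))"
  proof -
    have "2 * Suc m = Suc (Suc (2*m))"
      by simp
    then have "(fact (2 * Suc m) :: real) = (2 * (real m + 1)) * ((2 * real m + 1) * fact (2*m))"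
      by (simp add: algebra_simps)
    then show ?thesis
      by (simp add: algebra_simps)
  qed
  finally show ?case .
qed

lemma Gamma_nat_plus_one: "Gamma (real m + 1) = fact m"
  using Gamma_fact[of m, where 'a = real] by (simp add: add.commute)

lemma gbinom_nat_diff:
  assumes "a - k = real d"
  shows "gbinom a k = Gamma (a + 1) / (Gamma (k + 1) * fact d)"
  using assms Gamma_fact[of d, where 'a = real] by (simp add: gbinom_def add.commute)

lemma dfact_gbinom:
  assumes "r \<le> n" "even (n - r)"
  shows "real (dfact n) / real (dfact r) * gbinom ((real n - 1) / 2) ((real r - 1) / 2)
    = fact n / (fact r * fact ((n - r) div 2) * 2^((n - r) div 2))"
proof -
  obtain k where n: "n = r + 2*k"
    using assms by (metis dvd_def le_add_diff_inverse)
  have two_pow: "(2::real)^(j + k) = 2^j * 2^k" for j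
    by (simp add: power_add)
  show ?thesis
  proof (cases "even r")
    case True
    then obtain j where r: "r = 2*j" by blast
    have "gbinom ((real n - 1) / 2) ((real r - 1) / 2)
        = Gamma (real (j + k) + 1/2) / (Gamma (real j + 1/2) * fact k)"
      using n r by (subst gbinom_nat_diff[of _ _ k]) (simp_all add: field_simps)
    also have "\<dots> = (fact (2*(j + k)) / (2^(j + k) * 2^(j + k) * fact (j + k)))
        / (fact (2*j) / (2^j * 2^j * fact j) * fact k)"
      unfolding Gamma_nat_plus_half by (simp flip: power_mult_distrib)
    finally have gbinom: "gbinom ((real n - 1) / 2) ((real r - 1) / 2) = \<dots>" .
    have "real (dfact n) = 2^(j + k) * fact (j + k)" "real (dfact r) = 2^j * fact j"
      using n r dfact_even[of "j + k"] dfact_even[of j] by (simp_all add: algebra_simps)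
    then show ?thesis
      unfolding gbinom using n r by (simp add: two_pow field_simps)
  next
    case False
    then obtain j where r: "r = 2*j + 1"
      using oddE by blast
    have args: "(real n - 1) / 2 = real (j + k)" "(real r - 1) / 2 = real j"
      using n r by simp_all
    have "gbinom (real (j + k)) (real j) = Gamma (real (j + k) + 1) / (Gamma (real j + 1) * fact k)"
      by (rule gbinom_nat_diff) simp
    then have gbinom: "gbinom ((real n - 1) / 2) ((real r - 1) / 2) = fact (j + k) / (fact j * fact k)"
      unfolding args Gamma_nat_plus_one .
    have dfacts: "real (dfact n) = fact n / (2^(j + k) * fact (j + k))"
        "real (dfact r) = fact r / (2^j * fact j)"
      using n r dfact_odd[of "j + k"] dfact_odd[of j] by (simp_all add: eq_divide_eq)
    have "(n - r) div 2 = k"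
      using n by simp
    then show ?thesis
      unfolding gbinom dfacts by (simp add: two_pow field_simps)
  qed
qed

lemma hermite_dfact_expansion:
  "hermite n b = real (dfact n) * (\<Sum>r\<in>{r. r \<le> n \<and> even (n - r)}. (-1)^((n - r) div 2)
      / real (dfact r) * gbinom ((real n - 1) / 2) ((real r - 1) / 2) * b^r)"
proof -
  have "hermite n b = (\<Sum>k\<le>n div 2. fact n * (-1)^k / (fact (n - 2*k) * fact k * 2^k) * b^(n - 2*k))"
    unfolding hermite_def sum_distrib_left by (simp add: mult_ac)
  also have "\<dots> = (\<Sum>r\<in>{r. r \<le> n \<and> even (n - r)}. real (dfact n) * ((-1)^((n - r) div 2)
      / real (dfact r) * gbinom ((real n - 1) / 2) ((real r - 1) / 2) * b^r))"
  proof (rule sum.reindex_bij_witness[where j = "\<lambda>k. n - 2*k" and i = "\<lambda>r. (n - r) div 2"])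
    fix k
    assume "k \<in> {..n div 2}"
    then have k: "2*k \<le> n"
      by simp
    then show "(n - (n - 2*k)) div 2 = k" "n - 2*k \<in> {r. r \<le> n \<and> even (n - r)}"
      by auto
    have "real (dfact n) * ((-1)^((n - (n - 2*k)) div 2) / real (dfact (n - 2*k))
        * gbinom ((real n - 1) / 2) ((real (n - 2*k) - 1) / 2) * b^(n - 2*k))
        = (real (dfact n) / real (dfact (n - 2*k)) * gbinom ((real n - 1) / 2) ((real (n - 2*k) - 1) / 2))
          * ((-1)^k * b^(n - 2*k))"
      using k by simp
    also have "\<dots> = fact n / (fact (n - 2*k) * fact k * 2^k) * ((-1)^k * b^(n - 2*k))"
      using dfact_gbinom[of "n - 2*k" n] k by simp
    finally show "real (dfact n) * ((-1)^((n - (n - 2*k)) div 2) / real (dfact (n - 2*k))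
        * gbinom ((real n - 1) / 2) ((real (n - 2*k) - 1) / 2) * b^(n - 2*k))
        = fact n * (-1)^k / (fact (n - 2*k) * fact k * 2^k) * b^(n - 2*k)"
      by simp
  qed auto
  finally show ?thesis
    by (simp add: sum_distrib_left)
qed

lemma integral_std_normal2_hermite:
  assumes "0 < C" "0 \<le> x1" "x1 \<le> C"
  shows "integral\<^sup>L std_normal2
      (\<lambda>p. hermite (Suc n) ((fst p * x1 + snd p * sqrt (C^2 - x1^2)) / C) * indicator {b..} (fst p))
    = (x1 / C)^Suc n * (std_normal_density b * hermite n b)"
proof -
  define t where "t = x1 / C"
  define s where "s = sqrt (C^2 - x1^2) / C"
  have "s^2 = (C^2 - x1^2) / C^2"
    using assms by (simp add: s_def power_divide power_mono)
  then have variance: "1 - s^2 = t^2"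
    using assms by (simp add: t_def power_divide field_simps)
  have "integral\<^sup>L std_normal2
      (\<lambda>p. hermite (Suc n) ((fst p * x1 + snd p * sqrt (C^2 - x1^2)) / C) * indicator {b..} (fst p))
    = integral\<^sup>L std_normal2 (\<lambda>p. scaled_hermite 1 (Suc n) (t * fst p + s * snd p) * indicator {b..} (fst p))"
    by (simp add: hermite_eq_scaled_hermite t_def s_def add_divide_distrib mult_ac)
  also have "\<dots> = integral\<^sup>L std_normal (\<lambda>x. t^Suc n * hermite (Suc n) x * indicator {b..} x)"
    unfolding integral_std_normal2_scaled_hermite[OF atLeast_borel] variance scaled_hermite_rescale ..
  also have "\<dots> = t^Suc n * (std_normal_density b * hermite n b)"
    by (simp only: mult.assoc integral_mult_right_zero integral_std_normal_hermite_tail)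
  finally show ?thesis
    by (simp add: t_def)
qed

(* P r selects the indices r of the same parity as i - 1, in whichever form the two cases of the theorem state it. *)
lemma integral_std_normal2_hermite_closed_form:
  assumes "0 < C" "0 \<le> x1" "x1 \<le> C" "0 < i"
    and "\<And>r. r \<le> i - 1 \<Longrightarrow> P r \<longleftrightarrow> even (i - 1 - r)"
  shows "integral\<^sup>L std_normal2
      (\<lambda>p. hermite i ((fst p * x1 + snd p * sqrt (C^2 - x1^2)) / C) * indicator {a. a \<ge> b} (fst p))
    = real (dfact (i - 1)) * exp (- (b^2) / 2) / (C^i * sqrt (2 * pi))
      * (\<Sum>r\<in>{r. r \<le> i - 1 \<and> P r}. (-1)^((i - r - 1) div 2) / real (dfact r)
          * gbinom (real i / 2 - 1) ((real r - 1) / 2) * b^r) * x1^i"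
proof -
  obtain n where i: "i = Suc n"
    using assms(4) gr0_implies_Suc by blast
  have "{r. r \<le> i - 1 \<and> P r} = {r. r \<le> n \<and> even (n - r)}"
    using assms(5) i by auto
  moreover have "real i / 2 - 1 = (real n - 1) / 2"
    using i by (simp add: field_simps)
  ultimately show ?thesis
    using integral_std_normal2_hermite[OF assms(1-3), of n b] assms(1)
    by (simp add: i atLeast_def hermite_dfact_expansion[of n b] std_normal_density_def power_divide field_simps)
qed

theorem lemma8:
  fixes b :: real
  shows
   "(\<forall>(C::real) (i::nat) (x1::real). 0 < C \<and> C \<le> 1 \<and> even i \<and> 0 < i \<and> x1 \<in> {0..C} \<longrightarrow>
      integral\<^sup>L std_normal2 (\<lambda>p. hermite i ((fst p * x1 + snd p * sqrt (C^2 - x1^2)) / C) * indicator {a. a \<ge> b} (fst p))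
      = (real (dfact (i - 1)) * exp (- (b^2) / 2) / (C^i * sqrt (2 * pi)) *
          (\<Sum>r\<in>{r. r \<le> i - 1 \<and> odd r}. (-1)^((i - r - 1) div 2) / real (dfact r)
              * gbinom (real i / 2 - 1) ((real r - 1) / 2) * b^r)) * x1^i)
  \<and> (\<forall>(C::real) (i::nat) (x1::real). 0 < C \<and> odd i \<and> x1 \<in> {0..C} \<longrightarrow>
      integral\<^sup>L std_normal2 (\<lambda>p. hermite i ((fst p * x1 + snd p * sqrt (C^2 - x1^2)) / C) * indicator {a. a \<ge> b} (fst p))
      = (real (dfact (i - 1)) * exp (- (b^2) / 2) / (C^i * sqrt (2 * pi)) *
          (\<Sum>r\<in>{r. r \<le> i - 1 \<and> even r}. (-1)^((i - r - 1) div 2) / real (dfact r)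
              * gbinom (real i / 2 - 1) ((real r - 1) / 2) * b^r)) * x1^i)"
  by (intro conjI allI impI integral_std_normal2_hermite_closed_form) (auto dest: odd_pos)

end
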